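(* Let $0<c<1$ and let $m\in\mathcal P$ be such that $\mathcal F_c(m)=m$ and $m(x,y)\ge|obs(x)-obs(y)|$ for all $x,y\in E$. Then $m\ge\overline\delta^c$ pointwise.
   Context: Standing setting (diffusion): $E$ is a locally compact Hausdorff space with a countable base, equipped with its Borel $\sigma$-algebra and a fixed $1$-bounded metric $\Delta$ generating its topology (so $E$ is Polish). $(P_t)_{t\ge0}$ is a family of Markov kernels on $E$ obtained from a Feller–Dynkin semigroup $(\hat P_t)_{t\ge0}$ on $C_0(E)$ via $\hat P_t f(x)=\int f(y)\,P_t(x,\mathrm dy)$; the process is honest, i.e. $P_t(x,E)=1$ for all $t\ge0,x\in E$, and $P_0(x)=\delta_x$. We write $P_t(x)$ for the probability measure $P_t(x,\cdot)$. $\Omega$ is the space of continuous trajectories $\omega:[0,\infty)\to E$, with the topology of the uniform metric $U(\Delta)(\omega,\omega')=\sup_{t\ge0}\Delta(\omega(t),\omega'(t))$, assumed Polish; for each $x\in E$, $\mathbb P^x$ is the Borel probability measure on $\Omega$ of the canonical process started at $x$ (so $\omega(0)=x$ a.s. and the finite-dimensional distributions are given by the kernels $P_t$; in particular the law of $\omega(t)$ under $\mathbb P^x$ is $P_t(x)$). The map $x\mapsto\mathbb P^x$ is weakly continuous (hence so is $x\mapsto P_t(x)$ for each $t$). A continuous function $obs:E\to[0,1]$ is fixed. Transport: for Borel probability measures $\mu,\nu$ on a Polish space $X$, $\Gamma(\mu,\nu)$ is the set of couplings; for lower semicontinuous $c:X\times X\to[0,1]$, $W(c)(\mu,\nu)=\min_{\gamma\in\Gamma(\mu,\nu)}\int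 c\,\mathrm d\gamma$. Lattices: $\mathcal M$ is the set of $1$-bounded pseudometrics on $E$ ordered pointwise; $\mathcal P\subseteq\mathcal M$ consists of those that are lower semicontinuous as functions $E\times E\to[0,1]$ (for the topology of $\Delta$); $\mathcal C\subseteq\mathcal P$ consists of those that are continuous. Functional: for $0<c\le1$ and $m\in\mathcal P$, $\mathcal F_c(m)(x,y)=\sup_{t\ge0} c^t\,W(m)(P_t(x),P_t(y))$. Sequence: for $0<c<1$, $\delta^c_0(x,y)=|obs(x)-obs(y)|$ and $\delta^c_{n+1}=\mathcal F_c(\delta^c_n)$ (each $\delta^c_n$ lies in $\mathcal C$, since $\mathcal F_c$ maps $\mathcal C$ into $\mathcal C$ for $c<1$, so the recursion is well defined); the sequence is pointwise non-decreasing and $\overline\delta^c=\sup_n\delta^c_n$. *)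

theory Defs
  imports "HOL-Analysis.Analysis" "HOL-Probability.Probability"
begin

definition bounded_generating_metric :: "('a::topological_space \<Rightarrow> 'a \<Rightarrow> real) \<Rightarrow> bool" where
  "bounded_generating_metric D \<longleftrightarrow>
     (\<forall>x y. 0 \<le> D x y \<and> D x y \<le> 1) \<and>
     (\<forall>x y. D x y = 0 \<longleftrightarrow> x = y) \<and>
     (\<forall>x y. D x y = D y x) \<and>
     (\<forall>x y z. D x z \<le> D x y + D y z) \<and>
     (\<forall>S. open S \<longleftrightarrow> (\<forall>x\<in>S. \<exists>e>0. \<forall>y. D x y < e \<longrightarrow> y \<in> S))"

definition C0 :: "('a::topological_space \<Rightarrow> real) set" where
  "C0 = {f. continuous_on UNIV f \<and>
            (\<forall>e>0. \<exists>K. compact K \<and> (\<forall>x. x \<notin> K \<longrightarrow> \<bar>f x\<bar> < e))}"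

definition hatP :: "(real \<Rightarrow> 'a::topological_space \<Rightarrow> 'a measure) \<Rightarrow> real \<Rightarrow> ('a \<Rightarrow> real) \<Rightarrow> 'a \<Rightarrow> real" where
  "hatP P t f x = (\<integral>y. f y \<partial>(P t x))"

definition feller_dynkin_kernels :: "(real \<Rightarrow> 'a::topological_space \<Rightarrow> 'a measure) \<Rightarrow> bool" where
  "feller_dynkin_kernels P \<longleftrightarrow>
     (\<forall>t\<ge>0. \<forall>x. prob_space (P t x) \<and> sets (P t x) = sets borel) \<and>
     (\<forall>t\<ge>0. \<forall>A\<in>sets borel. (\<lambda>x. emeasure (P t x) A) \<in> borel_measurable borel) \<and>
     (\<forall>x. P 0 x = return borel x) \<and>
     (\<forall>s\<ge>0. \<forall>t\<ge>0. \<forall>x. \<forall>A\<in>sets borel.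
         emeasure (P (s + t) x) A = (\<integral>\<^sup>+ y. emeasure (P t y) A \<partial>(P s x))) \<and>
     (\<forall>t\<ge>0. \<forall>f\<in>C0. hatP P t f \<in> C0) \<and>
     (\<forall>f\<in>C0. ((\<lambda>t. SUP x. \<bar>hatP P t f x - f x\<bar>) \<longlongrightarrow> 0) (at_right 0))"

definition weakly_continuous_kernels :: "(real \<Rightarrow> 'a::topological_space \<Rightarrow> 'a measure) \<Rightarrow> bool" where
  "weakly_continuous_kernels P \<longleftrightarrow>
     (\<forall>t\<ge>0. \<forall>f::'a \<Rightarrow> real. continuous_on UNIV f \<longrightarrow> bounded (range f) \<longrightarrow>
        continuous_on UNIV (hatP P t f))"

definition couplings :: "'a::topological_space measure \<Rightarrow> 'a measure \<Rightarrow> ('a \<times> 'a) measure set" where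
  "couplings \<mu> \<nu> = {\<gamma>. prob_space \<gamma> \<and> sets \<gamma> = sets (borel :: ('a \<times> 'a) measure) \<and>
                        distr \<gamma> borel fst = \<mu> \<and> distr \<gamma> borel snd = \<nu>}"

text \<open>W(c)(mu,nu) = min over couplings of the integral of c (the minimum is attained
  for lower semicontinuous c on a Polish space, so it coincides with the infimum).\<close>
definition W :: "('a::topological_space \<Rightarrow> 'a \<Rightarrow> real) \<Rightarrow> 'a measure \<Rightarrow> 'a measure \<Rightarrow> real" where
  "W c \<mu> \<nu> = (INF \<gamma> \<in> couplings \<mu> \<nu>. \<integral>p. c (fst p) (snd p) \<partial>\<gamma>)"

definition pseudometrics1 :: "('a \<Rightarrow> 'a \<Rightarrow> real) set" where
  "pseudometrics1 = {m. (\<forall>x y. 0 \<le> m x y \<and> m x y \<le> 1) \<and> (\<forall>x. m x x = 0) \<and>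
                        (\<forall>x y. m x y = m y x) \<and> (\<forall>x y z. m x z \<le> m x y + m y z)}"

definition lsc :: "('b::topological_space \<Rightarrow> real) \<Rightarrow> bool" where
  "lsc f \<longleftrightarrow> (\<forall>a. open {p. a < f p})"

definition lsc_pseudometrics :: "('a::topological_space \<Rightarrow> 'a \<Rightarrow> real) set" where
  "lsc_pseudometrics = {m \<in> pseudometrics1. lsc (\<lambda>p::'a \<times> 'a. m (fst p) (snd p))}"

definition Fc :: "(real \<Rightarrow> 'a::topological_space \<Rightarrow> 'a measure) \<Rightarrow> real \<Rightarrow>
                  ('a \<Rightarrow> 'a \<Rightarrow> real) \<Rightarrow> 'a \<Rightarrow> 'a \<Rightarrow> real" where
  "Fc P c m x y = (SUP t \<in> {0::real..}. c powr t * W m (P t x) (P t y))"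

primrec delta :: "(real \<Rightarrow> 'a::topological_space \<Rightarrow> 'a measure) \<Rightarrow> ('a \<Rightarrow> real) \<Rightarrow> real \<Rightarrow>
                  nat \<Rightarrow> 'a \<Rightarrow> 'a \<Rightarrow> real" where
  "delta P obs c 0 = (\<lambda>x y. \<bar>obs x - obs y\<bar>)"
| "delta P obs c (Suc n) = Fc P c (delta P obs c n)"

definition delta_bar :: "(real \<Rightarrow> 'a::topological_space \<Rightarrow> 'a measure) \<Rightarrow> ('a \<Rightarrow> real) \<Rightarrow> real \<Rightarrow>
                  'a \<Rightarrow> 'a \<Rightarrow> real" where
  "delta_bar P obs c x y = (SUP n. delta P obs c n x y)"

end

theory Submission
  imports Defs
begin

text \<open>Since \<open>m\<close> dominates \<open>\<delta>\<^sub>0\<close> and \<open>\<F>\<^sub>c\<close> is monotone, induction gives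
  \<open>\<delta>\<^sub>n = \<F>\<^sub>c\<^sup>n(\<delta>\<^sub>0) \<le> \<F>\<^sub>c\<^sup>n(m) = m\<close> for every \<open>n\<close>, and hence \<open>\<delta>\<^sup>c \<le> m\<close> in the limit.
  Monotonicity of \<open>\<F>\<^sub>c\<close> reduces to monotonicity of the transport cost \<open>W\<close> in the cost
  function; the only care needed is that the suprema and infima involved are over nonempty,
  bounded sets (the product measure is always a coupling, and all costs lie in \<open>[0,1]\<close>).\<close>

lemma lsc_borel_measurable:
  fixes f :: "'b::topological_space \<Rightarrow> real"
  assumes "lsc f"
  shows "f \<in> borel_measurable borel"
  using assms unfolding lsc_def borel_measurable_iff_greater by auto

lemma pair_measure_in_couplings:
  fixes \<mu> \<nu> :: "'a::second_countable_topology measure"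
  assumes "prob_space \<mu>" "sets \<mu> = sets borel" "prob_space \<nu>" "sets \<nu> = sets borel"
  shows "\<mu> \<Otimes>\<^sub>M \<nu> \<in> couplings \<mu> \<nu>"
proof -
  interpret pp: pair_prob_space \<mu> \<nu>
    using assms by (simp add: pair_prob_space_def pair_sigma_finite_def prob_space_imp_sigma_finite)
  have "sets (\<mu> \<Otimes>\<^sub>M \<nu>) = sets (borel \<Otimes>\<^sub>M (borel::'a measure))"
    by (rule sets_pair_measure_cong) (use assms in auto)
  then have sets: "sets (\<mu> \<Otimes>\<^sub>M \<nu>) = sets (borel :: ('a \<times> 'a) measure)"
    by (simp only: borel_prod)
  have "distr (\<mu> \<Otimes>\<^sub>M \<nu>) borel fst = distr (\<mu> \<Otimes>\<^sub>M \<nu>) \<mu> fst"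
    by (rule distr_cong) (use assms in auto)
  also have "\<dots> = \<mu>" using pp.M2.distr_pair_fst .
  finally have fst: "distr (\<mu> \<Otimes>\<^sub>M \<nu>) borel fst = \<mu>" .
  have "distr (\<mu> \<Otimes>\<^sub>M \<nu>) borel snd = distr (\<mu> \<Otimes>\<^sub>M \<nu>) \<nu> snd"
    by (rule distr_cong) (use assms in auto)
  also have "\<dots> = \<nu>"
  proof (rule measure_eqI)
    fix A assume A: "A \<in> sets (distr (\<mu> \<Otimes>\<^sub>M \<nu>) \<nu> snd)"
    then have "emeasure (distr (\<mu> \<Otimes>\<^sub>M \<nu>) \<nu> snd) A = emeasure (\<mu> \<Otimes>\<^sub>M \<nu>) (space \<mu> \<times> A)"
      by (auto simp add: emeasure_distr space_pair_measure dest: sets.sets_into_space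
               intro!: arg_cong2[where f=emeasure])
    with A show "emeasure (distr (\<mu> \<Otimes>\<^sub>M \<nu>) \<nu> snd) A = emeasure \<nu> A"
      using pp.M2.emeasure_pair_measure_Times[where N=\<mu> and A="space \<mu>" and B=A]
        pp.M1.emeasure_space_1
      by (simp add: sets.top)
  qed simp
  finally have snd: "distr (\<mu> \<Otimes>\<^sub>M \<nu>) borel snd = \<nu>" .
  show ?thesis
    unfolding couplings_def using sets fst snd pp.prob_space_axioms by auto
qed

lemma feller_dynkin_couplings_nonempty:
  fixes P :: "real \<Rightarrow> 'a::second_countable_topology \<Rightarrow> 'a measure"
  assumes "feller_dynkin_kernels P" "0 \<le> t"
  shows "couplings (P t x) (P t y) \<noteq> {}"
  using assms pair_measure_in_couplings[of "P t x" "P t y"]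
  unfolding feller_dynkin_kernels_def by blast

lemma integrable_lsc_pseudometric_coupling:
  fixes m :: "'a::second_countable_topology \<Rightarrow> 'a \<Rightarrow> real"
  assumes m: "m \<in> lsc_pseudometrics" and \<gamma>: "\<gamma> \<in> couplings \<mu> \<nu>"
  shows "integrable \<gamma> (\<lambda>p. m (fst p) (snd p))"
proof -
  interpret prob_space \<gamma> using \<gamma> unfolding couplings_def by auto
  have "(\<lambda>p. m (fst p) (snd p)) \<in> borel_measurable (borel :: ('a \<times> 'a) measure)"
    using m unfolding lsc_pseudometrics_def by (auto intro: lsc_borel_measurable)
  then have "(\<lambda>p. m (fst p) (snd p)) \<in> borel_measurable \<gamma>"
    using \<gamma> measurable_cong_sets unfolding couplings_def by blast
  then show ?thesis
    using m unfolding lsc_pseudometrics_def pseudometrics1_def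
    by (intro integrable_const_bound[where B=1]) auto
qed

lemma W_le_integral:
  assumes d0: "\<And>x y. 0 \<le> d x y" and \<gamma>: "\<gamma> \<in> couplings \<mu> \<nu>"
  shows "W d \<mu> \<nu> \<le> (\<integral>p. d (fst p) (snd p) \<partial>\<gamma>)"
  unfolding W_def
  by (rule cINF_lower[OF bdd_belowI[where m=0] \<gamma>]) (auto intro: Bochner_Integration.integral_nonneg d0)

lemma W_nonneg:
  assumes "couplings \<mu> \<nu> \<noteq> {}" "\<And>x y. 0 \<le> d x y"
  shows "0 \<le> W d \<mu> \<nu>"
  unfolding W_def using assms by (intro cINF_greatest) (auto intro: Bochner_Integration.integral_nonneg)

lemma W_le_1:
  fixes m :: "'a::second_countable_topology \<Rightarrow> 'a \<Rightarrow> real"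
  assumes ne: "couplings \<mu> \<nu> \<noteq> {}" and m: "m \<in> lsc_pseudometrics"
  shows "W m \<mu> \<nu> \<le> 1"
proof -
  obtain \<gamma> where \<gamma>: "\<gamma> \<in> couplings \<mu> \<nu>" using ne by blast
  interpret prob_space \<gamma> using \<gamma> unfolding couplings_def by auto
  have m01: "0 \<le> m x y \<and> m x y \<le> 1" for x y
    using m unfolding lsc_pseudometrics_def pseudometrics1_def by auto
  have "W m \<mu> \<nu> \<le> (\<integral>p. m (fst p) (snd p) \<partial>\<gamma>)"
    using W_le_integral[OF _ \<gamma>] m01 by blast
  also have "\<dots> \<le> (\<integral>p. 1 \<partial>\<gamma>)"
    using m01 by (intro integral_mono integrable_lsc_pseudometric_coupling[OF m \<gamma>]) auto
  also have "\<dots> = 1" by (simp add: prob_space)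
  finally show ?thesis .
qed

lemma W_mono:
  fixes m :: "'a::second_countable_topology \<Rightarrow> 'a \<Rightarrow> real"
  assumes ne: "couplings \<mu> \<nu> \<noteq> {}" and m: "m \<in> lsc_pseudometrics"
    and d0: "\<And>x y. 0 \<le> d x y" and dm: "\<And>x y. d x y \<le> m x y"
  shows "W d \<mu> \<nu> \<le> W m \<mu> \<nu>"
proof -
  have "W d \<mu> \<nu> \<le> (\<integral>p. m (fst p) (snd p) \<partial>\<gamma>)" if \<gamma>: "\<gamma> \<in> couplings \<mu> \<nu>" for \<gamma>
  proof -
    have m_int: "integrable \<gamma> (\<lambda>p. m (fst p) (snd p))"
      using integrable_lsc_pseudometric_coupling[OF m \<gamma>] .
    \<comment> \<open>A non-integrable \<open>d\<close> has Bochner integral \<open>0\<close>, which is still below the integral of \<open>m \<ge> 0\<close>.\<close>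
    have "(\<integral>p. d (fst p) (snd p) \<partial>\<gamma>) \<le> (\<integral>p. m (fst p) (snd p) \<partial>\<gamma>)"
    proof (cases "integrable \<gamma> (\<lambda>p. d (fst p) (snd p))")
      case True
      then show ?thesis using m_int dm by (intro integral_mono)
    next
      case False
      have "0 \<le> (\<integral>p. m (fst p) (snd p) \<partial>\<gamma>)"
        by (rule Bochner_Integration.integral_nonneg) (use d0 dm order_trans in blast)
      with False show ?thesis by (simp add: not_integrable_integral_eq)
    qed
    then show ?thesis using W_le_integral[where d=d, OF d0 \<gamma>] by linarith
  qed
  then show ?thesis using ne unfolding W_def by (blast intro: cINF_greatest)
qed

lemma Fc_mono:
  fixes m :: "'a::second_countable_topology \<Rightarrow> 'a \<Rightarrow> real"
  assumes ne: "\<And>t x y. 0 \<le> t \<Longrightarrow> couplings (P t x) (P t y) \<noteq> {}"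
    and c: "0 < c" "c \<le> 1" and m: "m \<in> lsc_pseudometrics"
    and d0: "\<And>x y. 0 \<le> d x y" and dm: "\<And>x y. d x y \<le> m x y"
  shows "0 \<le> Fc P c d x y \<and> Fc P c d x y \<le> Fc P c m x y"
proof -
  let ?f = "\<lambda>t. c powr t * W d (P t x) (P t y)"
  let ?g = "\<lambda>t. c powr t * W m (P t x) (P t y)"
  have terms: "0 \<le> ?f t \<and> ?f t \<le> ?g t \<and> ?g t \<le> 1" if t: "t \<in> {0..}" for t
  proof -
    have "0 \<le> W d (P t x) (P t y)" "W d (P t x) (P t y) \<le> W m (P t x) (P t y)"
      "W m (P t x) (P t y) \<le> 1" "0 < c powr t" "c powr t \<le> 1"
      using t ne W_nonneg[where d=d] W_mono[OF _ m d0 dm] W_le_1[OF _ m] d0 c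
      by (auto simp: powr_le1)
    then show ?thesis by (auto intro: mult_left_mono mult_le_one)
  qed
  have bdd_f: "bdd_above (?f ` {0..})" and bdd_g: "bdd_above (?g ` {0..})"
    using terms by (auto intro!: bdd_aboveI[where M=1] dest: order_trans)
  have "0 \<le> ?f 0" using terms[of 0] by simp
  also have "\<dots> \<le> Fc P c d x y" unfolding Fc_def by (rule cSUP_upper[OF _ bdd_f]) simp
  finally have "0 \<le> Fc P c d x y" .
  moreover have "Fc P c d x y \<le> Fc P c m x y"
    unfolding Fc_def using terms by (intro cSUP_mono[OF _ bdd_g]) auto
  ultimately show ?thesis ..
qed

theorem mainTheorem5:
  fixes \<Delta> :: "'a::{second_countable_topology, t2_space} \<Rightarrow> 'a \<Rightarrow> real"
    and P :: "real \<Rightarrow> 'a \<Rightarrow> 'a measure"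
    and obs :: "'a \<Rightarrow> real"
    and c :: real
    and m :: "'a \<Rightarrow> 'a \<Rightarrow> real"
  assumes metric: "bounded_generating_metric \<Delta>"
    and loc_compact: "locally_compact_space (euclidean :: 'a topology)"
    and kernels: "feller_dynkin_kernels P"
    and weak_cont: "weakly_continuous_kernels P"
    and obs_cont: "continuous_on UNIV obs"
    and obs_range: "\<forall>x. 0 \<le> obs x \<and> obs x \<le> 1"
    and c_pos: "0 < c" and c_lt1: "c < 1"
    and m_P: "m \<in> lsc_pseudometrics"
    and m_fix: "Fc P c m = m"
    and m_obs: "\<forall>x y. \<bar>obs x - obs y\<bar> \<le> m x y"
  shows "\<forall>x y. delta_bar P obs c x y \<le> m x y"
proof -
  have couplings_ne: "\<And>t x y. 0 \<le> t \<Longrightarrow> couplings (P t x) (P t y) \<noteq> {}"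
    using feller_dynkin_couplings_nonempty[OF kernels] .
  have delta_le_m: "\<forall>x y. 0 \<le> delta P obs c n x y \<and> delta P obs c n x y \<le> m x y" for n
  proof (induction n)
    case 0
    then show ?case using m_obs by simp
  next
    case (Suc n)
    then have "0 \<le> Fc P c (delta P obs c n) x y \<and> Fc P c (delta P obs c n) x y \<le> Fc P c m x y"
      for x y
      using c_lt1 by (intro Fc_mono[where P=P, OF couplings_ne c_pos _ m_P]) auto
    then show ?case using m_fix by simp
  qed
  then show ?thesis
    unfolding delta_bar_def by (auto intro!: cSUP_least)
qed

end
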